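(* Let $A$ be a Büchi automaton over $2^{AP}$, $\varphi$ an LTL formula, and $A'$ a Büchi automaton with $\mathcal{L}(A')=\mathcal{L}(A)\cap\{\pi\mid\pi\models\varphi\}$. Then $\mathrm{Cn}_{LTL}(\mathrm{supp}(A)\cup\{\varphi\})=\mathrm{supp}(A')$.
   Context: Fix a finite nonempty $AP$. LTL formulae $\varphi::=\bot\mid p\mid\neg\varphi\mid\varphi\lor\varphi\mid X\varphi\mid\varphi U\varphi$ with the standard semantics on traces $\pi\in(2^{AP})^\omega$. Kripke structures $M=(S,I,T,\lambda)$ (finite $S$, nonempty $I$, left-total $T$, $\lambda:S\to 2^{AP}$); $M\models\varphi$ iff all traces of $M$ satisfy $\varphi$; $\mathrm{Cn}_{LTL}(X)$ = formulae satisfied by every Kripke structure satisfying all of $X$. Büchi automata over alphabet $2^{AP}$ accept infinite words via runs from initial states visiting recurrence states infinitely often; $\mathcal{L}(A)$ is the language. $\mathrm{supp}(A):=\{\psi\mid\pi\models\psi\ \forall\pi\in\mathcal{L}(A)\}$. *)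

theory Defs
  imports Main
begin

datatype 'a ltl =
    LBot
  | LProp 'a
  | LNot "'a ltl"
  | LOr "'a ltl" "'a ltl"
  | LNext "'a ltl"
  | LUntil "'a ltl" "'a ltl"

type_synonym 'a trace = "nat \<Rightarrow> 'a set"

definition suffix :: "nat \<Rightarrow> 'a trace \<Rightarrow> 'a trace" where
  "suffix k \<pi> = (\<lambda>i. \<pi> (i + k))"

fun ltl_sat :: "'a trace \<Rightarrow> 'a ltl \<Rightarrow> bool" where
  "ltl_sat \<pi> LBot = False"
| "ltl_sat \<pi> (LProp p) = (p \<in> \<pi> 0)"
| "ltl_sat \<pi> (LNot \<phi>) = (\<not> ltl_sat \<pi> \<phi>)"
| "ltl_sat \<pi> (LOr \<phi> \<psi>) = (ltl_sat \<pi> \<phi> \<or> ltl_sat \<pi> \<psi>)"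
| "ltl_sat \<pi> (LNext \<phi>) = ltl_sat (suffix 1 \<pi>) \<phi>"
| "ltl_sat \<pi> (LUntil \<phi> \<psi>) =
     (\<exists>k. ltl_sat (suffix k \<pi>) \<psi> \<and> (\<forall>j<k. ltl_sat (suffix j \<pi>) \<phi>))"

record ('s, 'a) kripke =
  kS :: "'s set"
  kI :: "'s set"
  kT :: "('s \<times> 's) set"
  kL :: "'s \<Rightarrow> 'a set"

definition is_kripke :: "('s, 'a) kripke \<Rightarrow> bool" where
  "is_kripke M \<longleftrightarrow> finite (kS M) \<and> kI M \<noteq> {} \<and> kI M \<subseteq> kS M
     \<and> kT M \<subseteq> kS M \<times> kS M \<and> (\<forall>s\<in>kS M. \<exists>t. (s, t) \<in> kT M)"

definition kripke_traces :: "('s, 'a) kripke \<Rightarrow> 'a trace set" where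
  "kripke_traces M = {\<lambda>i. kL M (\<rho> i) | \<rho>.
      \<rho> 0 \<in> kI M \<and> (\<forall>i. (\<rho> i, \<rho> (Suc i)) \<in> kT M)}"

definition kripke_models :: "('s, 'a) kripke \<Rightarrow> 'a ltl \<Rightarrow> bool" where
  "kripke_models M \<phi> \<longleftrightarrow> (\<forall>\<pi>\<in>kripke_traces M. ltl_sat \<pi> \<phi>)"

text \<open>Every finite Kripke
  structure is isomorphic to one whose states are natural numbers, so
  quantifying over structures with state type nat covers all of them.\<close>
definition Cn_LTL :: "'a ltl set \<Rightarrow> 'a ltl set" where
  "Cn_LTL X = {\<psi>. \<forall>M :: (nat, 'a) kripke. is_kripke M \<longrightarrow>
      (\<forall>\<phi>\<in>X. kripke_models M \<phi>) \<longrightarrow> kripke_models M \<psi>}"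

record ('q, 'a) buchi =
  bQ :: "'q set"
  bInit :: "'q set"
  bDelta :: "('q \<times> 'a set \<times> 'q) set"
  bAcc :: "'q set"

definition is_buchi :: "('q, 'a) buchi \<Rightarrow> bool" where
  "is_buchi A \<longleftrightarrow> finite (bQ A) \<and> bInit A \<subseteq> bQ A \<and> bAcc A \<subseteq> bQ A
     \<and> (\<forall>(q, a, q') \<in> bDelta A. q \<in> bQ A \<and> q' \<in> bQ A)"

definition buchi_lang :: "('q, 'a) buchi \<Rightarrow> 'a trace set" where
  "buchi_lang A = {w. \<exists>r. r 0 \<in> bInit A \<and> (\<forall>i. (r i, w i, r (Suc i)) \<in> bDelta A)
      \<and> infinite {i. r i \<in> bAcc A}}"

definition supp :: "('q, 'a) buchi \<Rightarrow> 'a ltl set" where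
  "supp A = {\<psi>. \<forall>\<pi>\<in>buchi_lang A. ltl_sat \<pi> \<psi>}"

end

theory Submission
  imports Defs "HOL-Library.Infinite_Set"
begin

text \<open>Both inclusions reduce to ultimately periodic words. Given a word w and a formula \<psi>,
  choose positions i < j that carry the same automaton (or Kripke) state and the same set of
  true subformulas of \<psi>, with an accepting state in between and every until-eventuality
  still pending at i fulfilled before j; looping w back from j to i yields a lasso word that
  is accepted along the looped run and agrees with w on \<psi>. If \<psi> follows from
  supp A \<union> {\<phi>} but fails on a word of L(A'), the lasso of that word is the only trace of a
  finite Kripke structure satisfying supp A \<union> {\<phi>} but not \<psi>. Conversely, an ultimately
  periodic trace of a model of supp A \<union> {\<phi>} is in L(A), as otherwise the negation of its
  characteristic formula (expressible since AP is finite) would belong to supp A; hence it is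
  in L(A') and satisfies every \<psi> \<in> supp A'.\<close>

section \<open>LTL semantics along reindexed words\<close>

definition holds :: "'a trace \<Rightarrow> nat \<Rightarrow> 'a ltl \<Rightarrow> bool" where
  "holds w n \<chi> = ltl_sat (suffix n w) \<chi>"

lemma ltl_sat_iff_holds_0: "ltl_sat w \<chi> = holds w 0 \<chi>"
  by (simp add: holds_def suffix_def)

lemma holds_simps [simp]:
  "holds w n LBot = False"
  "holds w n (LProp p) = (p \<in> w n)"
  "holds w n (LNot \<chi>) = (\<not> holds w n \<chi>)"
  "holds w n (LOr a b) = (holds w n a \<or> holds w n b)"
  "holds w n (LNext \<chi>) = holds w (Suc n) \<chi>"
  "holds w n (LUntil a b) = (\<exists>k. holds w (n + k) b \<and> (\<forall>l<k. holds w (n + l) a))"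
  by (simp_all add: holds_def suffix_def add.commute add.left_commute)

lemma holds_LUntil_unfold:
  "holds w n (LUntil a b) \<longleftrightarrow> holds w n b \<or> (holds w n a \<and> holds w (Suc n) (LUntil a b))"
  (is "?U \<longleftrightarrow> ?R")
proof
  assume ?U
  then obtain k where "holds w (n + k) b" "\<forall>l<k. holds w (n + l) a" by auto
  then show ?R by (cases k) (fastforce+)
next
  assume ?R
  then show ?U
  proof
    assume "holds w n a \<and> holds w (Suc n) (LUntil a b)"
    then obtain k where "holds w n a" "holds w (n + Suc k) b" "\<forall>l<k. holds w (Suc n + l) a" by auto
    then show ?U by (auto simp: less_Suc_eq_0_disj intro!: exI[of _ "Suc k"])
  qed (auto intro: exI[of _ 0])
qed

fun subformulas :: "'a ltl \<Rightarrow> 'a ltl set" where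
  "subformulas LBot = {LBot}"
| "subformulas (LProp p) = {LProp p}"
| "subformulas (LNot a) = insert (LNot a) (subformulas a)"
| "subformulas (LOr a b) = insert (LOr a b) (subformulas a \<union> subformulas b)"
| "subformulas (LNext a) = insert (LNext a) (subformulas a)"
| "subformulas (LUntil a b) = insert (LUntil a b) (subformulas a \<union> subformulas b)"

lemma finite_subformulas: "finite (subformulas \<chi>)"
  by (induction \<chi>) auto

lemma subformulas_refl: "\<chi> \<in> subformulas \<chi>"
  by (cases \<chi>) auto

lemma subformulas_trans: "\<chi>' \<in> subformulas \<chi> \<Longrightarrow> subformulas \<chi>' \<subseteq> subformulas \<chi>"
  by (induction \<chi>) auto

lemma until_witness_imp_solution:
  assumes rec: "\<And>n. U n \<longleftrightarrow> B n \<or> (A n \<and> U (Suc n))"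
    and "B (n + k)" "\<forall>l<k. A (n + l)"
  shows "U n"
  using assms(2,3)
proof (induction k arbitrary: n)
  case (Suc k)
  then have "U (Suc n)" by (intro Suc.IH) (simp_all, metis Suc_mono add_Suc_right)
  moreover have "A n" using Suc.prems(2) by (metis add_0_right zero_less_Suc)
  ultimately show ?case using rec by blast
qed (metis rec add_0_right)

lemma solution_imp_until_witness:
  assumes rec: "\<And>n. U n \<longleftrightarrow> B n \<or> (A n \<and> U (Suc n))"
    and "U n" "B (n + d)"
  shows "\<exists>k. B (n + k) \<and> (\<forall>l<k. A (n + l))"
  using assms(2,3)
proof (induction d arbitrary: n)
  case (Suc d)
  show ?case
  proof (cases "B n")
    case False
    then have "A n" "U (Suc n)" using Suc.prems(1) rec by blast+
    then obtain k where "B (Suc n + k)" "\<forall>l<k. A (Suc n + l)"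
      using Suc.IH Suc.prems(2) by fastforce
    then show ?thesis using \<open>A n\<close> by (auto simp: less_Suc_eq_0_disj intro!: exI[of _ "Suc k"])
  qed (auto intro: exI[of _ 0])
qed (auto intro: exI[of _ 0])

lemma holds_reindex_iff:
  fixes w :: "'a trace" and f :: "nat \<Rightarrow> nat"
  assumes step: "\<And>n \<chi>. \<chi> \<in> subformulas \<psi> \<Longrightarrow>
      holds w (f (Suc n)) \<chi> \<longleftrightarrow> holds w (Suc (f n)) \<chi>"
    and fulfil: "\<And>n a b. LUntil a b \<in> subformulas \<psi> \<Longrightarrow> holds w (f n) (LUntil a b)
                    \<Longrightarrow> \<exists>m\<ge>n. holds w (f m) b"
    and "subformulas \<chi> \<subseteq> subformulas \<psi>"
  shows "holds (\<lambda>x. w (f x)) n \<chi> \<longleftrightarrow> holds w (f n) \<chi>"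
  using assms(3)
proof (induction \<chi> arbitrary: n)
  case (LNext a)
  then have "a \<in> subformulas \<psi>" using subformulas_refl by auto
  then show ?case using LNext step by auto
next
  case (LUntil a b)
  have U: "LUntil a b \<in> subformulas \<psi>" using LUntil.prems by auto
  have IH: "holds (\<lambda>x. w (f x)) n a \<longleftrightarrow> holds w (f n) a"
    "holds (\<lambda>x. w (f x)) n b \<longleftrightarrow> holds w (f n) b" for n
    using LUntil by auto
  have rec: "holds w (f n) (LUntil a b) \<longleftrightarrow>
      holds w (f n) b \<or> (holds w (f n) a \<and> holds w (f (Suc n)) (LUntil a b))" for n
    using holds_LUntil_unfold step[OF U] by blast
  show ?case
  proof
    assume "holds (\<lambda>x. w (f x)) n (LUntil a b)"
    then show "holds w (f n) (LUntil a b)"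
      using until_witness_imp_solution[where U = "\<lambda>n. holds w (f n) (LUntil a b)", OF rec]
      by (auto simp: IH)
  next
    assume h: "holds w (f n) (LUntil a b)"
    then obtain m where "m \<ge> n" "holds w (f m) b" using fulfil[OF U] by blast
    then obtain d where "holds w (f (n + d)) b" by (metis le_add_diff_inverse)
    then show "holds (\<lambda>x. w (f x)) n (LUntil a b)"
      using solution_imp_until_witness[where U = "\<lambda>n. holds w (f n) (LUntil a b)", OF rec h]
      by (auto simp: IH)
  qed
qed auto

section \<open>Lassos\<close>

text \<open>The index map of the lasso with stem [0, i) and loop [i, j).\<close>
definition lasso_idx :: "nat \<Rightarrow> nat \<Rightarrow> nat \<Rightarrow> nat" where
  "lasso_idx i j n = (if n < i then n else i + (n - i) mod (j - i))"

lemma lasso_idx_0 [simp]: "lasso_idx i j 0 = 0"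
  by (simp add: lasso_idx_def)

lemma lasso_idx_stem: "n < i \<Longrightarrow> lasso_idx i j n = n"
  by (simp add: lasso_idx_def)

lemma lasso_idx_ge: "i \<le> n \<Longrightarrow> i \<le> lasso_idx i j n"
  by (simp add: lasso_idx_def)

lemma lasso_idx_less:
  assumes "i < j"
  shows "lasso_idx i j n < j"
proof -
  have "(n - i) mod (j - i) < j - i" using assms by simp
  then have "i + (n - i) mod (j - i) < j" by linarith
  then show ?thesis using assms by (simp add: lasso_idx_def)
qed

lemma lasso_idx_Suc:
  assumes "i < j"
  shows "lasso_idx i j (Suc n) = (if Suc (lasso_idx i j n) < j then Suc (lasso_idx i j n) else i)"
proof (cases "n < i")
  case True
  then show ?thesis using assms by (auto simp: lasso_idx_def)
next
  case False
  have "(n - i) mod (j - i) < j - i" using assms by simp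
  then show ?thesis using False by (auto simp: lasso_idx_def Suc_diff_le mod_Suc)
qed

lemma lasso_idx_Suc_cases:
  assumes "i < j"
  shows "lasso_idx i j (Suc n) = Suc (lasso_idx i j n) \<or>
    (lasso_idx i j (Suc n) = i \<and> Suc (lasso_idx i j n) = j)"
  using lasso_idx_Suc[OF assms, of n] lasso_idx_less[OF assms, of n] by auto

lemma lasso_idx_periodic:
  assumes "i \<le> n"
  shows "lasso_idx i j (n + (j - i)) = lasso_idx i j n"
proof -
  have "n + (j - i) - i = (n - i) + (j - i)" using assms by simp
  then have "(n + (j - i) - i) mod (j - i) = (n - i) mod (j - i)"
    by (simp only: mod_add_self2)
  then show ?thesis using assms by (simp add: lasso_idx_def)
qed

lemma infinite_lasso_idx_preimage:
  assumes "i \<le> p" "p < j"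
  shows "infinite {n. lasso_idx i j n = p}"
  unfolding infinite_nat_iff_unbounded_le
proof
  fix m
  have "i + (j - i) * m + (p - i) - i = (p - i) + (j - i) * m" using assms by simp
  then have "(i + (j - i) * m + (p - i) - i) mod (j - i) = p - i"
    using assms by (simp only: mod_mult_self2) simp
  then have "lasso_idx i j (i + (j - i) * m + (p - i)) = p"
    using assms by (simp add: lasso_idx_def)
  moreover have "m \<le> (j - i) * m" using assms by auto
  then have "m \<le> i + (j - i) * m + (p - i)" by linarith
  ultimately show "\<exists>n\<ge>m. n \<in> {n. lasso_idx i j n = p}" by blast
qed

lemma finite_family_eventually_never:
  fixes P :: "'b \<Rightarrow> nat \<Rightarrow> bool"
  assumes "finite B"
  shows "\<exists>N. \<forall>b\<in>B. finite {n. P b n} \<longrightarrow> (\<forall>n\<ge>N. \<not> P b n)"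
proof -
  have "finite (\<Union>b\<in>{b\<in>B. finite {n. P b n}}. {n. P b n})" using assms by auto
  from finite_nat_bounded[OF this]
  obtain N where "(\<Union>b\<in>{b\<in>B. finite {n. P b n}}. {n. P b n}) \<subseteq> {..<N}" ..
  then show ?thesis by (auto intro!: exI[of _ N])
qed

lemma finite_family_hits_before:
  fixes F :: "nat set set"
  assumes "finite F" "\<forall>S\<in>F. infinite S"
  shows "\<exists>M. \<forall>S\<in>F. \<exists>n\<in>S. i \<le> n \<and> n < M"
proof -
  have "\<forall>S\<in>F. \<exists>n. n \<in> S \<and> i \<le> n"
    using assms(2) unfolding infinite_nat_iff_unbounded_le by blast
  from bchoice[OF this] obtain g where g: "\<forall>S\<in>F. g S \<in> S \<and> i \<le> g S" ..
  have "g S < Suc (Max (g ` F))" if "S \<in> F" for S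
    using assms(1) that by (simp add: le_imp_less_Suc)
  then show ?thesis using g by blast
qed

lemma finite_range_recurrent:
  fixes T :: "nat \<Rightarrow> 'b"
  assumes "finite (range T)"
  shows "\<exists>i\<ge>N. infinite {j. T j = T i}"
proof -
  have "finite (T ` {N..})" using assms by (rule finite_subset[rotated]) auto
  then obtain i where "i \<in> {N..}" "infinite {j \<in> {N..}. T j = T i}"
    using pigeonhole_infinite[OF infinite_Ici] by blast
  moreover have "{j \<in> {N..}. T j = T i} \<subseteq> {j. T j = T i}" by blast
  ultimately show ?thesis using infinite_super by blast
qed

lemma loop_points_exist:
  fixes r :: "nat \<Rightarrow> 'q" and w :: "'a trace"
  assumes "finite Q" "\<forall>n. r n \<in> Q" "infinite {n. r n \<in> Acc}"
  shows "\<exists>i j. i < j \<and> r i = r j \<and> (\<exists>k. i \<le> k \<and> k < j \<and> r k \<in> Acc)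
     \<and> (\<forall>\<chi>\<in>subformulas \<psi>. holds w i \<chi> \<longleftrightarrow> holds w j \<chi>)
     \<and> (\<forall>a b. LUntil a b \<in> subformulas \<psi> \<longrightarrow>
           (\<exists>p. i \<le> p \<and> p < j \<and> holds w p b) \<or> (\<forall>p\<ge>i. \<not> holds w p b))"
proof -
  define T where "T n = (r n, {\<chi> \<in> subformulas \<psi>. holds w n \<chi>})" for n
  have "range T \<subseteq> Q \<times> Pow (subformulas \<psi>)" using assms(2) by (auto simp: T_def)
  then have "finite (range T)"
    by (rule finite_subset) (use assms(1) finite_subformulas in auto)
  define B where "B = {b. \<exists>a. LUntil a b \<in> subformulas \<psi>}"
  have "B \<subseteq> subformulas \<psi>"
    unfolding B_def using subformulas_trans subformulas_refl by fastforce
  then have "finite B" using finite_subformulas by (rule finite_subset)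
  then obtain N
    where N: "\<And>b p. b \<in> B \<Longrightarrow> finite {p. holds w p b} \<Longrightarrow> N \<le> p \<Longrightarrow> \<not> holds w p b"
    using finite_family_eventually_never[of B "\<lambda>b p. holds w p b"] by blast
  obtain i where "N \<le> i" and recurrent: "infinite {j. T j = T i}"
    using finite_range_recurrent[OF \<open>finite (range T)\<close>] by blast
  define F where
    "F = insert {n. r n \<in> Acc} ((\<lambda>b. {p. holds w p b}) ` {b\<in>B. infinite {p. holds w p b}})"
  have "finite F" using \<open>finite B\<close> by (simp add: F_def)
  moreover have "\<forall>S\<in>F. infinite S" unfolding F_def using assms(3) by blast
  ultimately obtain M where M: "\<forall>S\<in>F. \<exists>n\<in>S. i \<le> n \<and> n < M"
    using finite_family_hits_before by blast
  obtain j where j: "max M (Suc i) \<le> j" "T j = T i"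
    using recurrent[unfolded infinite_nat_iff_unbounded_le, rule_format, of "max M (Suc i)"]
    by blast
  then have "r i = r j"
    and "{\<chi> \<in> subformulas \<psi>. holds w j \<chi>} = {\<chi> \<in> subformulas \<psi>. holds w i \<chi>}"
    by (simp_all add: T_def)
  then have same: "\<forall>\<chi>\<in>subformulas \<psi>. holds w i \<chi> \<longleftrightarrow> holds w j \<chi>" by blast
  have "{n. r n \<in> Acc} \<in> F" unfolding F_def by (rule insertI1)
  with M obtain k where "k \<in> {n. r n \<in> Acc}" "i \<le> k" "k < M" by blast
  then have accepting: "\<exists>k. i \<le> k \<and> k < j \<and> r k \<in> Acc" using j(1) by auto
  have fulfilled: "(\<exists>p. i \<le> p \<and> p < j \<and> holds w p b) \<or> (\<forall>p\<ge>i. \<not> holds w p b)"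
    if "LUntil a b \<in> subformulas \<psi>" for a b
  proof -
    have "b \<in> B" using that by (auto simp: B_def)
    show ?thesis
    proof (cases "finite {p. holds w p b}")
      case True
      have "\<forall>p\<ge>i. \<not> holds w p b"
        using N[OF \<open>b \<in> B\<close> True] \<open>N \<le> i\<close> le_trans by blast
      then show ?thesis ..
    next
      case False
      then have "b \<in> {b \<in> B. infinite {p. holds w p b}}" using \<open>b \<in> B\<close> by blast
      then have "{p. holds w p b} \<in> F" unfolding F_def by (intro insertI2) (rule imageI)
      with M obtain p where "p \<in> {p. holds w p b}" "i \<le> p" "p < M" by blast
      then have "i \<le> p \<and> p < j \<and> holds w p b" using j(1) by simp
      then show ?thesis by blast
    qed
  qed
  have "i < j" using j(1) by simp
  with \<open>r i = r j\<close> accepting same fulfilled show ?thesis by blast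
qed

lemma holds_lasso_iff:
  fixes w :: "'a trace"
  assumes "i < j"
    and same: "\<forall>\<chi>\<in>subformulas \<psi>. holds w i \<chi> \<longleftrightarrow> holds w j \<chi>"
    and fulfilled: "\<forall>a b. LUntil a b \<in> subformulas \<psi> \<longrightarrow>
           (\<exists>p. i \<le> p \<and> p < j \<and> holds w p b) \<or> (\<forall>p\<ge>i. \<not> holds w p b)"
  shows "ltl_sat (\<lambda>n. w (lasso_idx i j n)) \<psi> \<longleftrightarrow> ltl_sat w \<psi>"
proof -
  let ?f = "lasso_idx i j"
  have step: "holds w (?f (Suc n)) \<chi> \<longleftrightarrow> holds w (Suc (?f n)) \<chi>"
    if "\<chi> \<in> subformulas \<psi>" for n \<chi>
    using lasso_idx_Suc_cases[OF \<open>i < j\<close>, of n] same that by auto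
  have "\<exists>m\<ge>n. holds w (?f m) b"
    if U: "LUntil a b \<in> subformulas \<psi>" and "holds w (?f n) (LUntil a b)" for n a b
  proof (cases "\<exists>p. i \<le> p \<and> p < j \<and> holds w p b")
    case True
    then obtain p where p: "i \<le> p" "p < j" "holds w p b" by blast
    then obtain m where "m \<ge> n" "?f m = p"
      using infinite_lasso_idx_preimage[OF p(1,2)] unfolding infinite_nat_iff_unbounded_le
      by blast
    then show ?thesis using p(3) by blast
  next
    case False
    then have never: "\<forall>p\<ge>i. \<not> holds w p b" using fulfilled U by blast
    obtain k where k: "holds w (?f n + k) b" using \<open>holds w (?f n) (LUntil a b)\<close> by auto
    then have "?f n + k < i" using never by (meson not_less)
    then have "n < i" using lasso_idx_ge[of i n j] by linarith
    then have "?f (n + k) = ?f n + k" using \<open>?f n + k < i\<close> by (simp add: lasso_idx_stem)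
    then show ?thesis using k by (metis le_add1)
  qed
  then have "holds (\<lambda>n. w (?f n)) 0 \<psi> \<longleftrightarrow> holds w (?f 0) \<psi>"
    using holds_reindex_iff[of \<psi> w ?f] step by blast
  then show ?thesis by (simp add: ltl_sat_iff_holds_0)
qed

lemma run_along_lasso:
  assumes "i < j" "r i = r j" "\<forall>n. R (r n) (w n) (r (Suc n))"
  shows "R (r (lasso_idx i j n)) (w (lasso_idx i j n)) (r (lasso_idx i j (Suc n)))"
proof -
  have "r (lasso_idx i j (Suc n)) = r (Suc (lasso_idx i j n))"
    using lasso_idx_Suc_cases[OF assms(1), of n] assms(2) by auto
  then show ?thesis using assms(3) by simp
qed

lemma lasso_of_run:
  fixes r :: "nat \<Rightarrow> 'q" and w :: "'a trace"
  assumes "finite Q" "\<forall>n. r n \<in> Q" "infinite {n. r n \<in> Acc}"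
  shows "\<exists>i j. i < j \<and> r i = r j \<and> infinite {n. r (lasso_idx i j n) \<in> Acc}
     \<and> (ltl_sat (\<lambda>n. w (lasso_idx i j n)) \<psi> \<longleftrightarrow> ltl_sat w \<psi>)"
proof -
  obtain i j where ij: "i < j" "r i = r j"
    and accepting: "\<exists>k. i \<le> k \<and> k < j \<and> r k \<in> Acc"
    and same: "\<forall>\<chi>\<in>subformulas \<psi>. holds w i \<chi> \<longleftrightarrow> holds w j \<chi>"
    and fulfilled: "\<forall>a b. LUntil a b \<in> subformulas \<psi> \<longrightarrow>
           (\<exists>p. i \<le> p \<and> p < j \<and> holds w p b) \<or> (\<forall>p\<ge>i. \<not> holds w p b)"
    using loop_points_exist[OF assms, of \<psi> w] by blast
  from accepting obtain k where k: "i \<le> k" "k < j" "r k \<in> Acc" by blast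
  have "{n. lasso_idx i j n = k} \<subseteq> {n. r (lasso_idx i j n) \<in> Acc}" using k(3) by auto
  then have "infinite {n. r (lasso_idx i j n) \<in> Acc}"
    using infinite_lasso_idx_preimage[OF k(1,2)] infinite_super by blast
  moreover have "ltl_sat (\<lambda>n. w (lasso_idx i j n)) \<psi> \<longleftrightarrow> ltl_sat w \<psi>"
    using holds_lasso_iff[OF ij(1) same fulfilled] .
  ultimately show ?thesis using ij by blast
qed

section \<open>Characteristic formulas of lasso words\<close>

definition LAnd :: "'a ltl \<Rightarrow> 'a ltl \<Rightarrow> 'a ltl" where
  "LAnd a b = LNot (LOr (LNot a) (LNot b))"

lemma holds_LAnd [simp]: "holds w n (LAnd a b) \<longleftrightarrow> holds w n a \<and> holds w n b"
  by (simp add: LAnd_def)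

definition LIff :: "'a ltl \<Rightarrow> 'a ltl \<Rightarrow> 'a ltl" where
  "LIff a b = LOr (LAnd a b) (LAnd (LNot a) (LNot b))"

lemma holds_LIff [simp]: "holds w n (LIff a b) \<longleftrightarrow> (holds w n a \<longleftrightarrow> holds w n b)"
  by (auto simp: LIff_def)

fun LConj :: "'a ltl list \<Rightarrow> 'a ltl" where
  "LConj [] = LNot LBot"
| "LConj (x # xs) = LAnd x (LConj xs)"

lemma holds_LConj [simp]: "holds w n (LConj xs) \<longleftrightarrow> (\<forall>x\<in>set xs. holds w n x)"
  by (induction xs) auto

fun LNexts :: "nat \<Rightarrow> 'a ltl \<Rightarrow> 'a ltl" where
  "LNexts 0 \<chi> = \<chi>"
| "LNexts (Suc k) \<chi> = LNext (LNexts k \<chi>)"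

lemma holds_LNexts [simp]: "holds w n (LNexts k \<chi>) \<longleftrightarrow> holds w (n + k) \<chi>"
  by (induction k arbitrary: n) auto

definition LAlways :: "'a ltl \<Rightarrow> 'a ltl" where
  "LAlways \<chi> = LNot (LUntil (LNot LBot) (LNot \<chi>))"

lemma holds_LAlways [simp]: "holds w n (LAlways \<chi>) \<longleftrightarrow> (\<forall>k. holds w (n + k) \<chi>)"
  by (auto simp: LAlways_def)

definition atoms :: "'a::finite list" where
  "atoms = (SOME xs. set xs = UNIV)"

lemma set_atoms [simp]: "set atoms = UNIV"
  unfolding atoms_def using someI_ex[OF finite_list[OF finite_UNIV]] .

definition letter_formula :: "'a::finite set \<Rightarrow> 'a ltl" where
  "letter_formula a = LConj (map (\<lambda>q. if q \<in> a then LProp q else LNot (LProp q)) atoms)"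

lemma holds_letter_formula [simp]: "holds w n (letter_formula a) \<longleftrightarrow> w n = a"
proof -
  have "holds w n (letter_formula a) \<longleftrightarrow>
      (\<forall>q. holds w n (if q \<in> a then LProp q else LNot (LProp q)))"
    by (simp only: letter_formula_def holds_LConj set_map set_atoms ball_simps)
  also have "\<dots> \<longleftrightarrow> w n = a" by (auto simp: set_eq_iff)
  finally show ?thesis .
qed

definition same_letter_after :: "nat \<Rightarrow> 'a::finite ltl" where
  "same_letter_after p = LConj (map (\<lambda>q. LIff (LProp q) (LNexts p (LProp q))) atoms)"

lemma holds_same_letter_after [simp]: "holds w n (same_letter_after p) \<longleftrightarrow> w n = w (n + p)"
  by (auto simp: same_letter_after_def)

definition lasso_formula :: "'a::finite trace \<Rightarrow> nat \<Rightarrow> nat \<Rightarrow> 'a ltl" where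
  "lasso_formula \<pi> i p =
     LAnd (LConj (map (\<lambda>k. LNexts k (letter_formula (\<pi> k))) [0..<i + p]))
          (LNexts i (LAlways (same_letter_after p)))"

lemma ltl_sat_lasso_formula_iff:
  assumes "0 < p" "\<forall>m. \<pi> (i + m + p) = \<pi> (i + m)"
  shows "ltl_sat \<sigma> (lasso_formula \<pi> i p) \<longleftrightarrow> \<sigma> = \<pi>"
proof
  assume "ltl_sat \<sigma> (lasso_formula \<pi> i p)"
  then have prefix: "\<forall>k<i + p. \<sigma> k = \<pi> k" and periodic: "\<forall>m. \<sigma> (i + m + p) = \<sigma> (i + m)"
    by (auto simp: ltl_sat_iff_holds_0 lasso_formula_def)
  have "\<sigma> n = \<pi> n" for n
  proof (induction n rule: less_induct)
    case (less n)
    show ?case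
    proof (cases "n < i + p")
      case False
      then obtain m where n: "n = i + m + p" by (intro that[of "n - i - p"]) simp
      then show ?thesis using periodic assms less n by simp
    qed (use prefix in blast)
  qed
  then show "\<sigma> = \<pi>" ..
qed (use assms in \<open>auto simp: ltl_sat_iff_holds_0 lasso_formula_def\<close>)

lemma ultimately_periodic_in_buchi_lang:
  fixes \<pi> :: "'a::finite trace" and A :: "('q, 'a) buchi"
  assumes "0 < p" "\<forall>m. \<pi> (i + m + p) = \<pi> (i + m)" "\<forall>\<chi>\<in>supp A. ltl_sat \<pi> \<chi>"
  shows "\<pi> \<in> buchi_lang A"
proof (rule ccontr)
  assume "\<pi> \<notin> buchi_lang A"
  then have "LNot (lasso_formula \<pi> i p) \<in> supp A"
    using ltl_sat_lasso_formula_iff[OF assms(1,2)] by (auto simp: supp_def)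
  then show False using assms(3) ltl_sat_lasso_formula_iff[OF assms(1,2)] by fastforce
qed

lemma buchi_lang_run:
  assumes "is_buchi A" "w \<in> buchi_lang A"
  obtains r where "r 0 \<in> bInit A" "\<forall>n. (r n, w n, r (Suc n)) \<in> bDelta A"
    "infinite {n. r n \<in> bAcc A}" "\<forall>n. r n \<in> bQ A"
proof -
  obtain r where r: "r 0 \<in> bInit A" "\<forall>n. (r n, w n, r (Suc n)) \<in> bDelta A"
    "infinite {n. r n \<in> bAcc A}" using assms(2) unfolding buchi_lang_def by blast
  have "r n \<in> bQ A" for n
  proof (cases n)
    case 0
    then show ?thesis using r(1) assms(1) by (auto simp: is_buchi_def)
  next
    case (Suc m)
    then show ?thesis using r(2)[rule_format, of m] assms(1) by (auto simp: is_buchi_def)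
  qed
  then show ?thesis using that r by blast
qed

lemma kripke_traces_run:
  assumes "is_kripke M" "\<pi> \<in> kripke_traces M"
  obtains \<rho> where "\<pi> = (\<lambda>n. kL M (\<rho> n))" "\<rho> 0 \<in> kI M" "\<forall>n. (\<rho> n, \<rho> (Suc n)) \<in> kT M"
    "\<forall>n. \<rho> n \<in> kS M"
proof -
  obtain \<rho> where \<rho>: "\<pi> = (\<lambda>n. kL M (\<rho> n))" "\<rho> 0 \<in> kI M" "\<forall>n. (\<rho> n, \<rho> (Suc n)) \<in> kT M"
    using assms(2) unfolding kripke_traces_def by blast
  have "\<rho> n \<in> kS M" for n
  proof (cases n)
    case 0
    then show ?thesis using \<rho>(2) assms(1) by (auto simp: is_kripke_def)
  next
    case (Suc m)
    then show ?thesis using \<rho>(3)[rule_format, of m] assms(1) by (auto simp: is_kripke_def)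
  qed
  then show ?thesis using that \<rho> by blast
qed

lemma buchi_lang_lasso:
  assumes "is_buchi A" "\<pi> \<in> buchi_lang A"
  shows "\<exists>i j. i < j \<and> (\<lambda>n. \<pi> (lasso_idx i j n)) \<in> buchi_lang A
     \<and> (ltl_sat (\<lambda>n. \<pi> (lasso_idx i j n)) \<psi> \<longleftrightarrow> ltl_sat \<pi> \<psi>)"
proof -
  obtain r where r: "r 0 \<in> bInit A" "\<forall>n. (r n, \<pi> n, r (Suc n)) \<in> bDelta A"
    "infinite {n. r n \<in> bAcc A}" "\<forall>n. r n \<in> bQ A"
    using buchi_lang_run[OF assms] .
  moreover have "finite (bQ A)" using assms(1) by (simp add: is_buchi_def)
  ultimately obtain i j where ij: "i < j" "r i = r j"
    and acc: "infinite {n. r (lasso_idx i j n) \<in> bAcc A}"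
    and sat: "ltl_sat (\<lambda>n. \<pi> (lasso_idx i j n)) \<psi> \<longleftrightarrow> ltl_sat \<pi> \<psi>"
    using lasso_of_run[of "bQ A" r "bAcc A" \<pi> \<psi>] by blast
  have "(r (lasso_idx i j n), \<pi> (lasso_idx i j n), r (lasso_idx i j (Suc n))) \<in> bDelta A" for n
    using run_along_lasso[OF ij, where R = "\<lambda>q a q'. (q, a, q') \<in> bDelta A"] r(2) by blast
  then have "(\<lambda>n. \<pi> (lasso_idx i j n)) \<in> buchi_lang A"
    unfolding buchi_lang_def using r(1) acc
    by (intro CollectI exI[of _ "\<lambda>n. r (lasso_idx i j n)"]) simp
  then show ?thesis using ij(1) sat by blast
qed

lemma kripke_traces_lasso:
  assumes "is_kripke M" "\<pi> \<in> kripke_traces M"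
  shows "\<exists>i j. i < j \<and> (\<lambda>n. \<pi> (lasso_idx i j n)) \<in> kripke_traces M
     \<and> (ltl_sat (\<lambda>n. \<pi> (lasso_idx i j n)) \<psi> \<longleftrightarrow> ltl_sat \<pi> \<psi>)"
proof -
  obtain \<rho> where \<rho>: "\<pi> = (\<lambda>n. kL M (\<rho> n))" "\<rho> 0 \<in> kI M" "\<forall>n. (\<rho> n, \<rho> (Suc n)) \<in> kT M"
    "\<forall>n. \<rho> n \<in> kS M"
    using kripke_traces_run[OF assms] .
  moreover have "finite (kS M)" using assms(1) by (simp add: is_kripke_def)
  moreover have "infinite {n. \<rho> n \<in> UNIV}" by simp
  ultimately obtain i j where ij: "i < j" "\<rho> i = \<rho> j"
    and sat: "ltl_sat (\<lambda>n. \<pi> (lasso_idx i j n)) \<psi> \<longleftrightarrow> ltl_sat \<pi> \<psi>"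
    using lasso_of_run[of "kS M" \<rho> UNIV \<pi> \<psi>] by blast
  have "(\<rho> (lasso_idx i j n), \<rho> (lasso_idx i j (Suc n))) \<in> kT M" for n
    using run_along_lasso[OF ij, where R = "\<lambda>s _ s'. (s, s') \<in> kT M"] \<rho>(3) by blast
  then have "(\<lambda>n. \<pi> (lasso_idx i j n)) \<in> kripke_traces M"
    unfolding kripke_traces_def \<rho>(1) using \<rho>(2)
    by (intro CollectI exI[of _ "\<lambda>n. \<rho> (lasso_idx i j n)"]) simp
  then show ?thesis using ij(1) sat by blast
qed

lemma kripke_of_lasso:
  assumes "i < j"
  shows "\<exists>M :: (nat, 'a) kripke. is_kripke M \<and> kripke_traces M = {\<lambda>n. \<pi> (lasso_idx i j n)}"
proof -
  define M :: "(nat, 'a) kripke" where "M = \<lparr>kS = {..<j}, kI = {0},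
    kT = {(x, y). x < j \<and> y = (if Suc x < j then Suc x else i)}, kL = \<pi>\<rparr>"
  have "is_kripke M" using assms by (auto simp: M_def is_kripke_def)
  moreover have "\<rho> = lasso_idx i j"
    if "\<rho> 0 = 0" "\<forall>n. \<rho> (Suc n) = (if Suc (\<rho> n) < j then Suc (\<rho> n) else i)" for \<rho>
  proof
    show "\<rho> n = lasso_idx i j n" for n
      by (induction n) (use that lasso_idx_Suc[OF assms] in auto)
  qed
  then have "kripke_traces M = {\<lambda>n. \<pi> (lasso_idx i j n)}"
    using lasso_idx_Suc[OF assms] lasso_idx_less[OF assms]
    by (auto simp: kripke_traces_def M_def)
  ultimately show ?thesis by blast
qed

lemma Cn_LTL_subset_supp:
  fixes A :: "('q, 'a) buchi"
  assumes "is_buchi A" "X \<subseteq> supp A"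
  shows "Cn_LTL X \<subseteq> supp A"
proof
  fix \<psi> assume \<psi>: "\<psi> \<in> Cn_LTL X"
  show "\<psi> \<in> supp A" unfolding supp_def
  proof (rule CollectI, rule ballI, rule ccontr)
    fix \<pi> assume "\<pi> \<in> buchi_lang A" "\<not> ltl_sat \<pi> \<psi>"
    with buchi_lang_lasso[OF assms(1) \<open>\<pi> \<in> buchi_lang A\<close>, of \<psi>]
    obtain i j where "i < j" and lang: "(\<lambda>n. \<pi> (lasso_idx i j n)) \<in> buchi_lang A"
      and refutes: "\<not> ltl_sat (\<lambda>n. \<pi> (lasso_idx i j n)) \<psi>"
      by blast
    obtain M :: "(nat, 'a) kripke"
      where M: "is_kripke M" "kripke_traces M = {\<lambda>n. \<pi> (lasso_idx i j n)}"
      using kripke_of_lasso[OF \<open>i < j\<close>, of \<pi>] by blast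
    have "kripke_models M \<chi>" if "\<chi> \<in> X" for \<chi>
      using lang assms(2) that unfolding M(2) kripke_models_def supp_def by blast
    then have "kripke_models M \<psi>" using \<psi> M(1) unfolding Cn_LTL_def by blast
    then show False using refutes unfolding M(2) kripke_models_def by blast
  qed
qed

lemma supp_subset_Cn_LTL:
  fixes A :: "('q, 'a::finite) buchi" and A' :: "('q2, 'a) buchi"
  assumes "buchi_lang A \<inter> {\<pi>. ltl_sat \<pi> \<phi>} \<subseteq> buchi_lang A'"
  shows "supp A' \<subseteq> Cn_LTL (supp A \<union> {\<phi>})"
proof
  fix \<psi> assume \<psi>: "\<psi> \<in> supp A'"
  show "\<psi> \<in> Cn_LTL (supp A \<union> {\<phi>})" unfolding Cn_LTL_def
  proof (intro CollectI allI impI)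
    fix M :: "(nat, 'a) kripke"
    assume M: "is_kripke M" and models: "\<forall>\<chi>\<in>supp A \<union> {\<phi>}. kripke_models M \<chi>"
    show "kripke_models M \<psi>" unfolding kripke_models_def
    proof (rule ballI, rule ccontr)
      fix \<pi> assume "\<pi> \<in> kripke_traces M" "\<not> ltl_sat \<pi> \<psi>"
      then obtain i j where "i < j" and trace: "(\<lambda>n. \<pi> (lasso_idx i j n)) \<in> kripke_traces M"
        and refutes: "\<not> ltl_sat (\<lambda>n. \<pi> (lasso_idx i j n)) \<psi>"
        using kripke_traces_lasso[OF M] by blast
      have sat: "ltl_sat (\<lambda>n. \<pi> (lasso_idx i j n)) \<chi>" if "\<chi> \<in> supp A \<union> {\<phi>}" for \<chi>
        using models that trace by (auto simp: kripke_models_def)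
      have "0 < j - i" using \<open>i < j\<close> by simp
      moreover have "\<forall>m. \<pi> (lasso_idx i j (i + m + (j - i))) = \<pi> (lasso_idx i j (i + m))"
        using lasso_idx_periodic[of i _ j] by simp
      moreover have "\<forall>\<chi>\<in>supp A. ltl_sat (\<lambda>n. \<pi> (lasso_idx i j n)) \<chi>" using sat by blast
      ultimately have "(\<lambda>n. \<pi> (lasso_idx i j n)) \<in> buchi_lang A"
        by (rule ultimately_periodic_in_buchi_lang)
      then have "(\<lambda>n. \<pi> (lasso_idx i j n)) \<in> buchi_lang A'" using assms sat by blast
      then show False using \<psi> refutes by (auto simp: supp_def)
    qed
  qed
qed

theorem mainTheorem14:
  fixes A :: "('q, 'ap::finite) buchi" and A' :: "('q2, 'ap) buchi" and \<phi> :: "'ap ltl"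
  assumes "is_buchi A" and "is_buchi A'"
    and "buchi_lang A' = buchi_lang A \<inter> {\<pi>. ltl_sat \<pi> \<phi>}"
  shows "Cn_LTL (supp A \<union> {\<phi>}) = supp A'"
proof
  have "supp A \<union> {\<phi>} \<subseteq> supp A'" using assms(3) by (auto simp: supp_def)
  then show "Cn_LTL (supp A \<union> {\<phi>}) \<subseteq> supp A'" by (rule Cn_LTL_subset_supp[OF assms(2)])
  show "supp A' \<subseteq> Cn_LTL (supp A \<union> {\<phi>})" using assms(3) by (intro supp_subset_Cn_LTL) simp
qed

end
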